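(* Let $n\ge 2$ be an integer and define $f_n(x)=\frac{(n-x)^{n-1}}{e^{n-x}(n-1)!}$ for $x\le n$ and $f_n(x)=0$ for $x>n$. Then: (i) $f_n$ is unimodal in $x$ with maximum value $f_n(1)$ (attained at $x=1$), and $f_n(1)\sim \frac{1}{\sqrt{2\pi n}}$ as $n\to\infty$; (ii) for every real $x\ge0$, $f_n(1+x)\le f_n(1-x)$; (iii) for every real $z\ge0$ there is a unique real number $b=b(n,z)$ with $0\le b\le z$ and $f_n(1-z)=f_n(1+z-b)$.
   Context: $f_n$ is the density of $X_1+\cdots+X_n$ where the $X_i$ are independent with density $e^{x-1}$ for $x\le1$ and $0$ for $x>1$. *)

theory Defs
  imports "HOL-Analysis.Analysis" "HOL-Library.Landau_Symbols"
begin

definition fdens :: "nat \<Rightarrow> real \<Rightarrow> real" where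
  "fdens n x = (if x \<le> real n
     then (real n - x) ^ (n - 1) / (exp (real n - x) * fact (n - 1))
     else 0)"

end

theory Submission
  imports Defs
begin

(* With m = n - 1 we have f_n(x) = g_m(n - x) / m! for x <= n, where g_m(t) = t^m e^(-t) increases
   on [0, m] and decreases on [m, oo); this gives (i) apart from the asymptotics. Inequality (ii)
   is g_m(m - x) <= g_m(m + x), i.e. m artanh (x / m) >= x. Part (iii) then follows from the
   intermediate value theorem on b in [0, z] and the strict decrease of f_n on [1, n).
   Finally f_n(1) = m^m / (e^m m!), so the asymptotics is Stirling's formula. For
   r_m = m! e^m / (m^m sqrt m) the artanh series gives Robbins' bounds
   0 <= ln r_m - ln r_(m+1) <= 1/(12 m) - 1/(12 (m+1)), so r_m tends to some C > 0; and
   r_m^2 / r_(2m) = sqrt 2 * 4^m m!^2 / ((2m)! sqrt m) tends to sqrt (2 pi) because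
   Gamma (1/2) = sqrt pi, which forces C = sqrt (2 pi). *)

lemma artanh_real_sums:
  fixes y :: real
  assumes "\<bar>y\<bar> < 1"
  shows "(\<lambda>k. y ^ (2 * k + 1) / of_nat (2 * k + 1)) sums artanh y"
proof -
  define x where "x = (1 + y) / (1 - y)"
  have "x > 0" using assms by (simp add: x_def)
  moreover have "(x - 1) / (x + 1) = y" using assms by (simp add: x_def field_simps)
  ultimately have "(\<lambda>k. 2 * (y ^ (2 * k + 1) / of_nat (2 * k + 1))) sums ln x"
    using ln_series_quadratic[of x] by simp
  from sums_divide[OF this, of 2] show ?thesis
    by (simp only: artanh_def x_def mult.commute[of 2] nonzero_mult_div_cancel_right zero_neq_numeral)
qed

lemma artanh_real_ge_self:
  fixes y :: real
  assumes "0 \<le> y" "y < 1"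
  shows "y \<le> artanh y"
proof -
  define a where "a k = y ^ (2 * k + 1) / of_nat (2 * k + 1)" for k
  have a: "a sums artanh y"
    unfolding a_def using assms by (intro artanh_real_sums) simp
  have "sum a {..<1} \<le> suminf a"
    by (rule sum_le_suminf) (use a assms in \<open>auto simp: sums_iff a_def\<close>)
  then show ?thesis using a by (simp add: sums_iff a_def)
qed

lemma artanh_real_le:
  fixes y :: real
  assumes "0 \<le> y" "y < 1"
  shows "artanh y \<le> y + y ^ 3 / (3 * (1 - y\<^sup>2))"
proof -
  have sq: "y\<^sup>2 < 1" using assms by (simp add: abs_square_less_1)
  have "(\<lambda>k. y ^ (2 * Suc k + 1) / of_nat (2 * Suc k + 1)) sums (artanh y - y)"
    using sums_Suc_iff[of "\<lambda>k. y ^ (2 * k + 1) / of_nat (2 * k + 1)" "artanh y - y"]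
      artanh_real_sums[of y] assms by simp
  moreover have "(\<lambda>k. y ^ 3 * (y\<^sup>2) ^ k / 3) sums (y ^ 3 * (1 / (1 - y\<^sup>2)) / 3)"
    using sq by (intro sums_divide sums_mult geometric_sums) simp
  moreover have "y ^ (2 * Suc k + 1) / of_nat (2 * Suc k + 1) \<le> y ^ 3 * (y\<^sup>2) ^ k / 3" for k
  proof -
    have "2 * Suc k + 1 = 3 + 2 * k" by simp
    then have "y ^ (2 * Suc k + 1) = y ^ 3 * (y\<^sup>2) ^ k"
      by (simp only: power_add power_mult)
    moreover have "y ^ 3 * (y\<^sup>2) ^ k / of_nat (2 * Suc k + 1) \<le> y ^ 3 * (y\<^sup>2) ^ k / 3"
      using assms by (intro divide_left_mono) auto
    ultimately show ?thesis by simp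
  qed
  ultimately have "artanh y - y \<le> y ^ 3 * (1 / (1 - y\<^sup>2)) / 3"
    by (rule sums_le[rotated])
  then show ?thesis by (simp add: mult.commute)
qed

definition gamma_kernel :: "nat \<Rightarrow> real \<Rightarrow> real" where
  "gamma_kernel m t = t ^ m / exp t"

lemma continuous_on_gamma_kernel: "continuous_on A (gamma_kernel m)"
  unfolding gamma_kernel_def by (intro continuous_intros) simp

lemma has_real_derivative_gamma_kernel:
  assumes "1 \<le> m"
  shows "(gamma_kernel m has_real_derivative t ^ (m - 1) * (real m - t) / exp t) (at t)"
proof -
  have "t ^ m = t * t ^ (m - 1)"
    using assms by (simp flip: power_Suc)
  then show ?thesis
    unfolding gamma_kernel_def
    by (auto intro!: derivative_eq_intros simp: field_simps power2_eq_square)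
qed

lemma gamma_kernel_strict_mono:
  assumes "0 \<le> s" "s < t" "t \<le> real m"
  shows "gamma_kernel m s < gamma_kernel m t"
proof (rule DERIV_pos_imp_increasing_open[OF \<open>s < t\<close> _ continuous_on_gamma_kernel])
  fix u assume "s < u" "u < t"
  with assms have "0 < u ^ (m - 1) * (real m - u) / exp u" by simp
  moreover have "1 \<le> m" using assms by linarith
  ultimately show "\<exists>y. (gamma_kernel m has_real_derivative y) (at u) \<and> 0 < y"
    using has_real_derivative_gamma_kernel by blast
qed

lemma gamma_kernel_strict_antimono:
  assumes "real m \<le> s" "s < t"
  shows "gamma_kernel m t < gamma_kernel m s"
proof (cases "m = 0")
  case True
  then show ?thesis
    using assms by (auto simp: gamma_kernel_def intro!: divide_strict_left_mono)
next
  case False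
  show ?thesis
  proof (rule DERIV_neg_imp_decreasing_open[OF \<open>s < t\<close> _ continuous_on_gamma_kernel])
    fix u assume "s < u" "u < t"
    with assms have "u ^ (m - 1) * (real m - u) / exp u < 0"
      by (intro divide_neg_pos mult_pos_neg) auto
    with False show "\<exists>y. (gamma_kernel m has_real_derivative y) (at u) \<and> y < 0"
      using has_real_derivative_gamma_kernel by (metis less_one not_less)
  qed
qed

lemma gamma_kernel_reflect_le:
  assumes "0 \<le> x" "x < real m"
  shows "gamma_kernel m (real m - x) \<le> gamma_kernel m (real m + x)"
proof -
  define u where "u = x / real m"
  have u: "0 \<le> u" "u < 1" using assms by (auto simp: u_def)
  have "2 * x = real m * (2 * u)" using assms by (simp add: u_def)
  also have "\<dots> \<le> real m * ln ((1 + u) / (1 - u))"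
    using artanh_real_ge_self[OF u] by (intro mult_left_mono) (auto simp: artanh_def)
  also have "(1 + u) / (1 - u) = (real m + x) / (real m - x)"
    using assms by (simp add: u_def field_simps)
  finally have "real m * ln (real m - x) - (real m - x) \<le> real m * ln (real m + x) - (real m + x)"
    using assms by (simp add: ln_div algebra_simps)
  then have "exp (real m * ln (real m - x) - (real m - x)) \<le> exp (real m * ln (real m + x) - (real m + x))"
    by simp
  then show ?thesis
    using assms by (simp add: gamma_kernel_def exp_diff exp_of_nat_mult)
qed

lemma fdens_eq_gamma_kernel:
  "x \<le> real n \<Longrightarrow> fdens n x = gamma_kernel (n - 1) (real n - x) / fact (n - 1)"
  by (simp add: fdens_def gamma_kernel_def)

lemma fdens_nonneg: "0 \<le> fdens n x"
  by (simp add: fdens_def)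

lemma fdens_pos: "x < real n \<Longrightarrow> 0 < fdens n x"
  by (simp add: fdens_def)

lemma fdens_eq_0: "real n < x \<Longrightarrow> fdens n x = 0"
  by (simp add: fdens_def)

lemma fdens_eq_0_ge: "2 \<le> n \<Longrightarrow> real n \<le> x \<Longrightarrow> fdens n x = 0"
  by (auto simp: fdens_def)

(* Fails for n = 1, where f_1 jumps from f_1 1 = 1 down to 0. *)
lemma continuous_on_fdens:
  assumes "2 \<le> n"
  shows "continuous_on A (fdens n)"
proof -
  have "fdens n = (\<lambda>x. max (real n - x) 0 ^ (n - 1) / (exp (real n - x) * fact (n - 1)))"
    using assms by (auto simp: fdens_def max_def fun_eq_iff)
  moreover have "continuous_on A (\<lambda>x. max (real n - x) 0 ^ (n - 1) / (exp (real n - x) * fact (n - 1)))"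
    by (intro continuous_intros) simp
  ultimately show ?thesis by simp
qed

lemma fdens_strict_mono:
  assumes "1 \<le> n" "x < y" "y \<le> 1"
  shows "fdens n x < fdens n y"
proof -
  have "real (n - 1) \<le> real n - y" "real n - y < real n - x"
    using assms by (auto simp: of_nat_diff)
  then have "gamma_kernel (n - 1) (real n - x) < gamma_kernel (n - 1) (real n - y)"
    by (rule gamma_kernel_strict_antimono)
  with assms show ?thesis
    by (simp add: fdens_eq_gamma_kernel divide_strict_right_mono)
qed

lemma fdens_mono:
  assumes "1 \<le> n" "x \<le> y" "y \<le> 1"
  shows "fdens n x \<le> fdens n y"
  using fdens_strict_mono[of n x y] assms by (cases "x = y") auto

lemma fdens_strict_antimono:
  assumes "1 \<le> x" "x < y" "x < real n"
  shows "fdens n y < fdens n x"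
proof (cases "y \<le> real n")
  case True
  have "0 \<le> real n - y" "real n - y < real n - x" "real n - x \<le> real (n - 1)"
    using assms True by (auto simp: of_nat_diff)
  then have "gamma_kernel (n - 1) (real n - y) < gamma_kernel (n - 1) (real n - x)"
    by (rule gamma_kernel_strict_mono)
  with assms True show ?thesis
    by (simp add: fdens_eq_gamma_kernel divide_strict_right_mono)
next
  case False
  with assms show ?thesis by (simp add: fdens_eq_0 fdens_pos)
qed

lemma fdens_antimono:
  assumes "1 \<le> x" "x \<le> y"
  shows "fdens n y \<le> fdens n x"
proof -
  consider "x = y" | "x < y" "x < real n" | "real n \<le> x" "x < y"
    using assms by linarith
  then show ?thesis
  proof cases
    case 2
    then show ?thesis using assms fdens_strict_antimono by (simp add: less_imp_le)
  next
    case 3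
    then show ?thesis by (simp add: fdens_eq_0 fdens_nonneg)
  qed simp
qed

lemma fdens_le_fdens_1:
  assumes "1 \<le> n"
  shows "fdens n x \<le> fdens n 1"
proof (cases "x < 1")
  case True
  then show ?thesis using fdens_strict_mono[OF assms] by (simp add: less_imp_le)
next
  case False
  then show ?thesis using fdens_antimono by simp
qed

lemma fdens_1_plus_le_1_minus:
  assumes "2 \<le> n" "0 \<le> x"
  shows "fdens n (1 + x) \<le> fdens n (1 - x)"
proof (cases "1 + x < real n")
  case True
  have "real (n - 1) = real n - 1" using assms by (simp add: of_nat_diff)
  then have "gamma_kernel (n - 1) (real n - (1 + x)) \<le> gamma_kernel (n - 1) (real n - (1 - x))"
    using gamma_kernel_reflect_le[of x "n - 1"] assms True by (simp add: algebra_simps)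
  with True assms show ?thesis
    by (simp add: fdens_eq_gamma_kernel divide_right_mono)
next
  case False
  then show ?thesis using assms by (simp add: fdens_eq_0_ge fdens_nonneg)
qed

lemma inj_on_fdens: "inj_on (fdens n) {1..<real n}"
  by (rule linorder_inj_onI') (metis atLeastLessThan_iff fdens_strict_antimono less_irrefl)

lemma ex1_fdens_balance:
  assumes "2 \<le> n" "0 \<le> z"
  shows "\<exists>!b. 0 \<le> b \<and> b \<le> z \<and> fdens n (1 - z) = fdens n (1 + z - b)"
proof (rule ex_ex1I)
  have "fdens n (1 + z - 0) \<le> fdens n (1 - z)" "fdens n (1 - z) \<le> fdens n (1 + z - z)"
    using assms by (simp_all add: fdens_1_plus_le_1_minus fdens_le_fdens_1)
  moreover have "continuous_on {0..z} (\<lambda>b. fdens n (1 + z - b))"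
    by (rule continuous_on_compose2[OF continuous_on_fdens[OF assms(1)], where t = UNIV])
      (auto intro!: continuous_intros)
  ultimately show "\<exists>b. 0 \<le> b \<and> b \<le> z \<and> fdens n (1 - z) = fdens n (1 + z - b)"
    using IVT'[of "\<lambda>b. fdens n (1 + z - b)"] assms by fastforce
next
  fix b b'
  assume b: "0 \<le> b \<and> b \<le> z \<and> fdens n (1 - z) = fdens n (1 + z - b)"
    and b': "0 \<le> b' \<and> b' \<le> z \<and> fdens n (1 - z) = fdens n (1 + z - b')"
  have "0 < fdens n (1 - z)" using assms by (intro fdens_pos) simp
  then have "1 + z - c \<in> {1..<real n}"
    if "0 \<le> c \<and> c \<le> z \<and> fdens n (1 - z) = fdens n (1 + z - c)" for c
    using that fdens_eq_0_ge[OF assms(1), of "1 + z - c"] by (cases "1 + z - c < real n") auto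
  with b b' have "1 + z - b = 1 + z - b'"
    using inj_on_fdens[of n] by (metis inj_onD)
  then show "b = b'" by simp
qed

definition stirling_ratio :: "nat \<Rightarrow> real" where
  "stirling_ratio m = fact m * exp (real m) / (real m ^ m * sqrt (real m))"

lemma stirling_ratio_pos: "1 \<le> m \<Longrightarrow> 0 < stirling_ratio m"
  by (simp add: stirling_ratio_def)

lemma ln_stirling_ratio:
  assumes "1 \<le> m"
  shows "ln (stirling_ratio m) = ln (fact m) + real m - (real m + 1/2) * ln (real m)"
  using assms
  by (simp add: stirling_ratio_def ln_mult ln_div ln_realpow ln_sqrt algebra_simps)

lemma ln_stirling_ratio_diff:
  assumes "1 \<le> m"
  shows "ln (stirling_ratio m) - ln (stirling_ratio (Suc m)) = (real m + 1/2) * ln (1 + 1 / real m) - 1"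
proof -
  have "1 + 1 / real m = (real m + 1) / real m"
    using assms by (simp add: field_simps)
  then have ln_quotient: "ln (1 + 1 / real m) = ln (real m + 1) - ln (real m)"
    using assms by (simp add: ln_div)
  have "ln (fact (Suc m) :: real) = ln (real m + 1) + ln (fact m)"
    by (simp add: ln_mult add.commute)
  then show ?thesis
    unfolding ln_quotient using assms by (simp add: ln_stirling_ratio algebra_simps)
qed

lemma ln_stirling_ratio_diff_bounds:
  assumes "1 \<le> m"
  shows "0 \<le> ln (stirling_ratio m) - ln (stirling_ratio (Suc m))"
    and "ln (stirling_ratio m) - ln (stirling_ratio (Suc m)) \<le> 1 / (12 * real m) - 1 / (12 * real (Suc m))"
proof -
  define y where "y = 1 / (2 * real m + 1)"
  have m: "0 < real m" using assms by simp
  have y: "0 < y" "y < 1" using m by (simp_all add: y_def)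
  have yy: "1 + y = (2 * real m + 2) * y" "1 - y = 2 * real m * y"
    by (simp_all add: y_def field_simps)
  then have "1 + 1 / real m = (1 + y) / (1 - y)"
    using m y by (simp add: field_simps)
  moreover have "real m + 1/2 = 1 / (2 * y)"
    by (simp add: y_def)
  ultimately have diff: "ln (stirling_ratio m) - ln (stirling_ratio (Suc m)) = artanh y / y - 1"
    using assms by (simp add: ln_stirling_ratio_diff artanh_def)
  show "0 \<le> ln (stirling_ratio m) - ln (stirling_ratio (Suc m))"
    using artanh_real_ge_self[of y] y by (simp add: diff)
  have "artanh y / y \<le> (y + y ^ 3 / (3 * (1 - y\<^sup>2))) / y"
    using artanh_real_le[of y] y by (simp add: divide_right_mono)
  also have "\<dots> = 1 + y\<^sup>2 / (3 * (1 - y\<^sup>2))"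
    using y by (simp add: field_simps power2_eq_square power3_eq_cube)
  also have "1 - y\<^sup>2 = (1 - y) * (1 + y)"
    by (simp add: power2_eq_square algebra_simps)
  also have "\<dots> = 4 * real m * (real m + 1) * y\<^sup>2"
    unfolding yy by (simp add: power2_eq_square algebra_simps)
  also have "y\<^sup>2 / (3 * (4 * real m * (real m + 1) * y\<^sup>2)) = 1 / (12 * real m * (real m + 1))"
    using y by simp
  also have "\<dots> = 1 / (12 * real m) - 1 / (12 * real (Suc m))"
    using m by (simp add: field_simps)
  finally show "ln (stirling_ratio m) - ln (stirling_ratio (Suc m)) \<le> 1 / (12 * real m) - 1 / (12 * real (Suc m))"
    by (simp add: diff)
qed

lemma stirling_ratio_convergent: "\<exists>C>0. stirling_ratio \<longlonglongrightarrow> C"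
proof -
  define S where "S k = ln (stirling_ratio (Suc k))" for k
  have "decseq S"
    using ln_stirling_ratio_diff_bounds(1) by (intro decseq_SucI) (simp add: S_def)
  moreover have "S 0 - 1 / 12 \<le> S k" for k
  proof -
    have "incseq (\<lambda>k. S k - 1 / (12 * real (Suc k)))"
    proof (rule incseq_SucI)
      fix k
      show "S k - 1 / (12 * real (Suc k)) \<le> S (Suc k) - 1 / (12 * real (Suc (Suc k)))"
        using ln_stirling_ratio_diff_bounds(2)[of "Suc k"] by (simp add: S_def)
    qed
    then have "S 0 - 1 / 12 \<le> S k - 1 / (12 * real (Suc k))"
      using incseqD[of _ 0 k] by fastforce
    also have "\<dots> \<le> S k"
      by simp
    finally show ?thesis .
  qed
  ultimately obtain L where "S \<longlonglongrightarrow> L"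
    using decseq_convergent[of S] by blast
  then have "(\<lambda>k. exp (S k)) \<longlonglongrightarrow> exp L"
    by (rule tendsto_exp)
  then have "(\<lambda>k. stirling_ratio (Suc k)) \<longlonglongrightarrow> exp L"
    by (simp add: S_def stirling_ratio_pos)
  then show ?thesis
    using LIMSEQ_imp_Suc by (intro exI[of _ "exp L"]) auto
qed

lemma central_binomial_limit:
  "(\<lambda>n. 4 ^ n * fact n ^ 2 / (fact (2 * n) * sqrt (real n))) \<longlonglongrightarrow> sqrt pi"
proof -
  have "(\<lambda>n. 1 / real n / 2) \<longlonglongrightarrow> 0"
    by (intro tendsto_divide_zero lim_1_over_n)
  then have "(\<lambda>n. Gamma_series (1/2) n * (1 + 1 / real n / 2)) \<longlonglongrightarrow> Gamma (1/2) * (1 + 0)"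
    by (intro tendsto_intros Gamma_series_LIMSEQ)
  moreover have "eventually (\<lambda>n. Gamma_series (1/2) n * (1 + 1 / real n / 2)
      = 4 ^ n * fact n ^ 2 / (fact (2 * n) * sqrt (real n))) sequentially"
    using eventually_ge_at_top[of 1]
  proof eventually_elim
    case (elim n)
    have "exp (1/2 * ln (real n)) = sqrt (real n)"
      using elim powr_half_sqrt[of "real n"] by (simp add: powr_def)
    then have "Gamma_series (1/2) n = fact n * sqrt (real n) / (pochhammer (1/2) n * (real n + 1/2))"
      by (simp add: Gamma_series_def pochhammer_Suc add.commute)
    also have "pochhammer (1/2) n = fact (2 * n) / (4 ^ n * fact n :: real)"
      by (simp add: fact_double power_mult)
    finally have "Gamma_series (1/2) n = 4 ^ n * fact n ^ 2 * sqrt (real n) / (fact (2 * n) * (real n + 1/2))"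
      by (simp add: power2_eq_square)
    moreover have "1 + 1 / real n / 2 = (real n + 1/2) / real n"
      using elim by (simp add: field_simps)
    ultimately have "Gamma_series (1/2) n * (1 + 1 / real n / 2)
        = 4 ^ n * fact n ^ 2 / fact (2 * n) * (sqrt (real n) / real n)"
      using add_pos_pos[of "real n" "1/2"] elim by simp
    also have "sqrt (real n) / real n = 1 / sqrt (real n)"
      using elim by (simp add: field_simps)
    finally show ?case
      by simp
  qed
  ultimately show ?thesis
    by (simp add: Gamma_one_half_real Lim_transform_eventually)
qed

lemma stirling_ratio_sq_div_double:
  assumes "1 \<le> m"
  shows "stirling_ratio m ^ 2 / stirling_ratio (2 * m)
       = sqrt 2 * (4 ^ m * fact m ^ 2 / (fact (2 * m) * sqrt (real m)))"
proof -
  have m: "0 < real m" using assms by simp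
  have "real m ^ (2 * m) = (real m ^ m) ^ 2"
    by (simp add: power_mult[symmetric] mult.commute)
  moreover have "(2::real) ^ (2 * m) = 4 ^ m"
    by (simp add: power_mult)
  ultimately have "real (2 * m) ^ (2 * m) = 4 ^ m * (real m ^ m) ^ 2"
    by (simp add: power_mult_distrib)
  moreover have "sqrt (real (2 * m)) = sqrt 2 * sqrt (real m)"
    by (simp add: real_sqrt_mult)
  moreover have "exp (real (2 * m)) = exp (real m) ^ 2"
    by (simp add: exp_double[symmetric])
  moreover have "sqrt (real m) ^ 2 = real m"
    by simp
  ultimately show ?thesis
    using m by (simp add: stirling_ratio_def field_simps)
qed

lemma stirling_ratio_tendsto: "stirling_ratio \<longlonglongrightarrow> sqrt (2 * pi)"
proof -
  obtain C where C: "0 < C" "stirling_ratio \<longlonglongrightarrow> C"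
    using stirling_ratio_convergent by blast
  have "(\<lambda>m. stirling_ratio (2 * m)) \<longlonglongrightarrow> C"
    using LIMSEQ_subseq_LIMSEQ[OF C(2), of "\<lambda>m. 2 * m"] by (simp add: strict_mono_def o_def)
  then have lim_C: "(\<lambda>m. stirling_ratio m ^ 2 / stirling_ratio (2 * m)) \<longlonglongrightarrow> C ^ 2 / C"
    using C by (intro tendsto_intros) auto
  have "(\<lambda>m. sqrt 2 * (4 ^ m * fact m ^ 2 / (fact (2 * m) * sqrt (real m)))) \<longlonglongrightarrow> sqrt 2 * sqrt pi"
    by (intro tendsto_intros central_binomial_limit)
  moreover have "eventually (\<lambda>m. sqrt 2 * (4 ^ m * fact m ^ 2 / (fact (2 * m) * sqrt (real m)))
      = stirling_ratio m ^ 2 / stirling_ratio (2 * m)) sequentially"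
    using eventually_ge_at_top[of 1] by eventually_elim (rule stirling_ratio_sq_div_double[symmetric])
  ultimately have "(\<lambda>m. stirling_ratio m ^ 2 / stirling_ratio (2 * m)) \<longlonglongrightarrow> sqrt 2 * sqrt pi"
    by (rule Lim_transform_eventually)
  with lim_C have "C ^ 2 / C = sqrt 2 * sqrt pi"
    by (rule LIMSEQ_unique)
  with C show ?thesis
    by (simp add: power2_eq_square real_sqrt_mult)
qed

lemma fdens_1_asymp_equiv: "(\<lambda>n. fdens n 1) \<sim>[at_top] (\<lambda>n. 1 / sqrt (2 * pi * real n))"
proof (rule asymp_equivI')
  have "(\<lambda>m. sqrt (2 * pi) / stirling_ratio m * sqrt (real (Suc m) / real m))
          \<longlonglongrightarrow> sqrt (2 * pi) / sqrt (2 * pi) * sqrt 1"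
    by (intro tendsto_intros stirling_ratio_tendsto LIMSEQ_Suc_n_over_n) auto
  moreover have "eventually (\<lambda>m. sqrt (2 * pi) / stirling_ratio m * sqrt (real (Suc m) / real m)
      = fdens (Suc m) 1 / (1 / sqrt (2 * pi * real (Suc m)))) sequentially"
    using eventually_ge_at_top[of 1]
  proof eventually_elim
    case (elim m)
    then have "fdens (Suc m) 1 = 1 / (stirling_ratio m * sqrt (real m))"
      by (simp add: fdens_def stirling_ratio_def)
    with elim stirling_ratio_pos[OF elim] show ?case
      by (simp only: real_sqrt_mult real_sqrt_divide) (simp add: field_simps)
  qed
  ultimately have "(\<lambda>m. fdens (Suc m) 1 / (1 / sqrt (2 * pi * real (Suc m)))) \<longlonglongrightarrow> 1"
    by (simp add: Lim_transform_eventually)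
  then show "((\<lambda>n. fdens n 1 / (1 / sqrt (2 * pi * real n))) \<longlongrightarrow> 1) at_top"
    by (rule LIMSEQ_imp_Suc)
qed

theorem lemma3:
  shows "(\<forall>n::nat. n \<ge> 2 \<longrightarrow>
            (\<forall>x y. x \<le> y \<and> y \<le> 1 \<longrightarrow> fdens n x \<le> fdens n y) \<and>
            (\<forall>x y. 1 \<le> x \<and> x \<le> y \<longrightarrow> fdens n y \<le> fdens n x) \<and>
            (\<forall>x. fdens n x \<le> fdens n 1))
       \<and> ((\<lambda>n. fdens n 1) \<sim>[at_top] (\<lambda>n. 1 / sqrt (2 * pi * real n)))
       \<and> (\<forall>n::nat. n \<ge> 2 \<longrightarrow> (\<forall>x::real. x \<ge> 0 \<longrightarrow> fdens n (1 + x) \<le> fdens n (1 - x)))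
       \<and> (\<forall>n::nat. n \<ge> 2 \<longrightarrow> (\<forall>z::real. z \<ge> 0 \<longrightarrow>
            (\<exists>!b. 0 \<le> b \<and> b \<le> z \<and> fdens n (1 - z) = fdens n (1 + z - b))))"
  by (intro conjI allI impI)
    (simp_all add: fdens_mono fdens_antimono fdens_le_fdens_1 fdens_1_asymp_equiv
                   fdens_1_plus_le_1_minus ex1_fdens_balance)

end
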